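(* Let $n,k,d$ be positive integers with $k\le d<n$, let $\alpha>0$, and for each integer $M\ge 0$ set $n_M=n+M$, $k_M=k+M$, $d_M=d+M$. Let $g_M:[1,k_M]\to\mathbb{R}$ be the piecewise linear function with $g_M(i)=\frac{n_M i\alpha}{n-k+i}$ at the integers $i=1,\dots,k_M$, linear between consecutive integers. Let $s\in(0,1]$ be fixed and put $i_M=1+s(k_M-1)$. Then $$ \lim_{M\to\infty}\frac{g_M(i_M)}{C_{k_M,d_M}\!\left(\alpha,\frac{(d_M-k_M+i_M)\alpha}{d_M-k_M+1}\right)}=1, $$ where for positive integers $k\le d$ and $\alpha,\gamma>0$, $$ C_{k,d}(\alpha,\gamma)=\sum_{j=0}^{k-1}\min\left\{\alpha,\frac{d-j}{d}\gamma\right\}. $$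
   Context: $C_{k,d}(\alpha,\gamma)$ as defined in the claim is the known capacity of functional-repair regenerating codes with reconstruction degree $k$, repair degree $d$, node size $\alpha$ and total repair bandwidth $\gamma$; for this statement only the explicit formula matters. *)

theory Defs
  imports "HOL-Analysis.Analysis"
begin

definition capC :: "nat \<Rightarrow> nat \<Rightarrow> real \<Rightarrow> real \<Rightarrow> real" where
  "capC k d \<alpha> \<gamma> = (\<Sum>j<k. min \<alpha> ((real d - real j) / real d * \<gamma>))"

definition gval :: "nat \<Rightarrow> nat \<Rightarrow> real \<Rightarrow> nat \<Rightarrow> int \<Rightarrow> real" where
  "gval n k \<alpha> M i = real (n + M) * real_of_int i * \<alpha> / (real n - real k + real_of_int i)"

definition gM :: "nat \<Rightarrow> nat \<Rightarrow> real \<Rightarrow> nat \<Rightarrow> real \<Rightarrow> real" where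
  "gM n k \<alpha> M x =
     (let i = \<lfloor>x\<rfloor> in
      gval n k \<alpha> M i + (x - real_of_int i) * (gval n k \<alpha> M (i + 1) - gval n k \<alpha> M i))"

end

theory Submission
  imports Defs "HOL-Real_Asymp.Real_Asymp"
begin

text \<open>The capacity sum has k_M terms, each at most \<alpha>, and the term with index j equals \<alpha>
  as long as j \<le> t_M, where t_M = d_M (i_M - 1) / (d_M - k_M + i_M) grows like M; hence
  \<alpha> t_M \<le> C \<le> \<alpha> k_M. The interpolant g_M is increasing and lies between
  n_M \<alpha> (i_M - 1)/(n - k + i_M - 1) and n_M \<alpha>. Both resulting bounds for the ratio are
  explicit rational functions of M tending to 1.\<close>

lemma capC_le: "capC K D \<alpha> \<gamma> \<le> real K * \<alpha>"
proof -
  have "capC K D \<alpha> \<gamma> \<le> (\<Sum>j<K. \<alpha>)"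
    unfolding capC_def by (rule sum_mono) simp
  then show ?thesis by simp
qed

lemma capC_ge:
  assumes "0 \<le> \<alpha>" "0 < \<gamma>" "K \<le> D"
  shows "\<alpha> * min (real K) (real D - real D * \<alpha> / \<gamma>) \<le> capC K D \<alpha> \<gamma>"
proof -
  define t where "t = real D - real D * \<alpha> / \<gamma>"
  define N where "N = nat (min (int K) (\<lfloor>t\<rfloor> + 1))"
  have "N \<le> K" unfolding N_def by linarith
  have full: "min \<alpha> ((real D - real j) / real D * \<gamma>) = \<alpha>" if "j < N" for j
  proof -
    have "real j \<le> t" and "0 < D"
      using that \<open>N \<le> K\<close> \<open>K \<le> D\<close> unfolding N_def by linarith+
    then have "real D * \<alpha> / \<gamma> \<le> real D - real j" unfolding t_def by simp
    then have "\<alpha> \<le> (real D - real j) / real D * \<gamma>"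
      using \<open>0 < D\<close> \<open>0 < \<gamma>\<close> by (simp add: field_simps)
    then show ?thesis by simp
  qed
  have "real N * \<alpha> = (\<Sum>j<N. min \<alpha> ((real D - real j) / real D * \<gamma>))"
    using full by simp
  also have "\<dots> \<le> capC K D \<alpha> \<gamma>"
    unfolding capC_def using \<open>N \<le> K\<close> \<open>K \<le> D\<close> assms(1,2)
    by (intro sum_mono2) auto
  finally have "real N * \<alpha> \<le> capC K D \<alpha> \<gamma>" .
  moreover have "min (real K) t \<le> real N" unfolding N_def by linarith
  ultimately show ?thesis
    unfolding t_def using assms(1) by (smt (verit) mult_left_mono mult.commute)
qed

lemma frac_mono:
  fixes c u v :: real
  assumes "0 < c" "0 \<le> u" "u \<le> v"
  shows "u / (c + u) \<le> v / (c + v)"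
proof -
  have "u * (c + v) \<le> v * (c + u)" using assms by (simp add: algebra_simps mult_left_mono)
  then show ?thesis using assms by (simp add: divide_simps)
qed

lemma gval_eq: "gval n k \<alpha> M i = real (n + M) * \<alpha> * (of_int i / (real n - real k + of_int i))"
  unfolding gval_def by simp

lemma gval_mono:
  assumes "k < n" "0 \<le> \<alpha>" "0 \<le> i" "i \<le> j"
  shows "gval n k \<alpha> M i \<le> gval n k \<alpha> M j"
  unfolding gval_eq using assms by (intro mult_left_mono frac_mono) auto

lemma gval_le:
  assumes "k < n" "0 \<le> \<alpha>" "0 \<le> i"
  shows "gval n k \<alpha> M i \<le> real (n + M) * \<alpha>"
proof -
  have "of_int i / (real n - real k + of_int i) \<le> 1"
    using assms by (simp add: divide_simps)
  from mult_left_mono[OF this, of "real (n + M) * \<alpha>"] show ?thesis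
    unfolding gval_eq using assms by simp
qed

lemma gM_between_gval:
  assumes "gval n k \<alpha> M \<lfloor>x\<rfloor> \<le> gval n k \<alpha> M (\<lfloor>x\<rfloor> + 1)"
  shows "gval n k \<alpha> M \<lfloor>x\<rfloor> \<le> gM n k \<alpha> M x"
    and "gM n k \<alpha> M x \<le> gval n k \<alpha> M (\<lfloor>x\<rfloor> + 1)"
proof -
  define \<theta> where "\<theta> = x - of_int \<lfloor>x\<rfloor>"
  have "0 \<le> \<theta>" "\<theta> \<le> 1" unfolding \<theta>_def by linarith+
  have "gM n k \<alpha> M x = gval n k \<alpha> M \<lfloor>x\<rfloor>
      + \<theta> * (gval n k \<alpha> M (\<lfloor>x\<rfloor> + 1) - gval n k \<alpha> M \<lfloor>x\<rfloor>)"
    unfolding gM_def \<theta>_def Let_def by simp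
  moreover have "0 \<le> \<theta> * (gval n k \<alpha> M (\<lfloor>x\<rfloor> + 1) - gval n k \<alpha> M \<lfloor>x\<rfloor>)"
    and "\<theta> * (gval n k \<alpha> M (\<lfloor>x\<rfloor> + 1) - gval n k \<alpha> M \<lfloor>x\<rfloor>)
      \<le> gval n k \<alpha> M (\<lfloor>x\<rfloor> + 1) - gval n k \<alpha> M \<lfloor>x\<rfloor>"
    using assms \<open>0 \<le> \<theta>\<close> \<open>\<theta> \<le> 1\<close> by (simp_all add: mult_left_le_one_le)
  ultimately show "gval n k \<alpha> M \<lfloor>x\<rfloor> \<le> gM n k \<alpha> M x"
    and "gM n k \<alpha> M x \<le> gval n k \<alpha> M (\<lfloor>x\<rfloor> + 1)" by linarith+
qed

lemma gM_le:
  assumes "k < n" "0 \<le> \<alpha>" "1 \<le> x"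
  shows "gM n k \<alpha> M x \<le> real (n + M) * \<alpha>"
proof -
  have "0 \<le> \<lfloor>x\<rfloor>" using assms by linarith
  then show ?thesis
    using gM_between_gval(2) gval_mono gval_le assms by (smt (verit))
qed

lemma gM_ge:
  assumes "k < n" "0 \<le> \<alpha>" "1 \<le> x"
  shows "real (n + M) * \<alpha> * ((x - 1) / (real n - real k + (x - 1))) \<le> gM n k \<alpha> M x"
proof -
  have "0 \<le> \<lfloor>x\<rfloor>" "x - 1 \<le> of_int \<lfloor>x\<rfloor>" using assms by linarith+
  then have "real (n + M) * \<alpha> * ((x - 1) / (real n - real k + (x - 1)))
      \<le> gval n k \<alpha> M \<lfloor>x\<rfloor>"
    unfolding gval_eq using assms by (intro mult_left_mono frac_mono) auto
  also have "\<dots> \<le> gM n k \<alpha> M x"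
    using \<open>0 \<le> \<lfloor>x\<rfloor>\<close> assms by (intro gM_between_gval(1) gval_mono) auto
  finally show ?thesis .
qed

lemma gM_div_capC_bounds:
  fixes K D M :: nat
  assumes "k < n" "0 < \<alpha>" "K \<le> D" "1 < x" "x \<le> real K"
  defines "g \<equiv> gM n k \<alpha> M x"
    and "C \<equiv> capC K D \<alpha> ((real D - real K + x) * \<alpha> / (real D - real K + 1))"
  shows "real (n + M) * (x - 1) / ((real n - real k + (x - 1)) * real K) \<le> g / C"
    and "g / C \<le> real (n + M) / (real D * (x - 1) / (real D - real K + x))"
proof -
  define a where "a = real D - real K"
  define t where "t = real D * (x - 1) / (a + x)"
  have "0 \<le> a" "0 < a + x" using assms unfolding a_def by simp_all
  have "0 < t" unfolding t_def using assms \<open>0 < a + x\<close> by simp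
  have "t \<le> real K"
  proof -
    have "a * x \<le> a * real K" using \<open>0 \<le> a\<close> assms by (intro mult_left_mono) auto
    then have "real D * (x - 1) \<le> real K * (a + x)" unfolding a_def by (simp add: algebra_simps)
    then show ?thesis unfolding t_def using \<open>0 < a + x\<close> by (simp add: divide_simps)
  qed
  have "0 < (a + x) * \<alpha> / (a + 1)" using \<open>0 \<le> a\<close> \<open>0 < a + x\<close> assms by simp
  from capC_ge[OF less_imp_le[OF \<open>0 < \<alpha>\<close>] this \<open>K \<le> D\<close>]
  have "\<alpha> * min (real K) (real D - real D * (a + 1) / (a + x)) \<le> C"
    unfolding C_def a_def using \<open>0 < \<alpha>\<close> by simp
  moreover have "real D - real D * (a + 1) / (a + x) = t"
    unfolding t_def using \<open>0 < a + x\<close> by (simp add: field_simps)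
  ultimately have "\<alpha> * t \<le> C" using \<open>t \<le> real K\<close> by simp
  have "C \<le> real K * \<alpha>" unfolding C_def by (rule capC_le)
  have "0 < \<alpha> * t" using \<open>0 < t\<close> assms by simp
  define gl where "gl = real (n + M) * \<alpha> * ((x - 1) / (real n - real k + (x - 1)))"
  have "0 \<le> gl" unfolding gl_def using assms by simp
  have "gl \<le> g" unfolding gl_def g_def using assms by (intro gM_ge) auto
  have "g \<le> real (n + M) * \<alpha>" unfolding g_def using assms by (intro gM_le) auto
  have "gl / (real K * \<alpha>) \<le> g / C"
    using \<open>0 \<le> gl\<close> \<open>gl \<le> g\<close> \<open>0 < \<alpha> * t\<close> \<open>\<alpha> * t \<le> C\<close> \<open>C \<le> real K * \<alpha>\<close>
    by (intro frac_le) auto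
  moreover have "g / C \<le> real (n + M) * \<alpha> / (\<alpha> * t)"
    using \<open>0 \<le> gl\<close> \<open>gl \<le> g\<close> \<open>g \<le> real (n + M) * \<alpha>\<close> \<open>0 < \<alpha> * t\<close> \<open>\<alpha> * t \<le> C\<close>
    by (intro frac_le) auto
  ultimately show "real (n + M) * (x - 1) / ((real n - real k + (x - 1)) * real K) \<le> g / C"
    and "g / C \<le> real (n + M) / (real D * (x - 1) / (real D - real K + x))"
    using assms(2) unfolding gl_def t_def a_def by simp_all
qed

theorem theorem5p1:
  fixes n k d :: nat and \<alpha> s :: real
  assumes "0 < k" "k \<le> d" "d < n" "0 < \<alpha>" "0 < s" "s \<le> 1"
  shows "(\<lambda>M. let kM = k + M; dM = d + M; iM = 1 + s * (real kM - 1) in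
            gM n k \<alpha> M iM /
            capC kM dM \<alpha> ((real dM - real kM + iM) * \<alpha> / (real dM - real kM + 1)))
         \<longlonglongrightarrow> 1"
proof -
  define x :: "nat \<Rightarrow> real" where "x M = 1 + s * (real (k + M) - 1)" for M
  define f where "f M = gM n k \<alpha> M (x M) / capC (k + M) (d + M) \<alpha>
    ((real (d + M) - real (k + M) + x M) * \<alpha> / (real (d + M) - real (k + M) + 1))" for M
  define lo where
    "lo M = real (n + M) * (x M - 1) / ((real n - real k + (x M - 1)) * real (k + M))" for M
  define hi where
    "hi M = real (n + M) / (real (d + M) * (x M - 1) / (real (d + M) - real (k + M) + x M))" for M
  have "lo \<longlonglongrightarrow> 1" "hi \<longlonglongrightarrow> 1"
    unfolding lo_def hi_def x_def using assms by real_asymp+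
  moreover have "lo M \<le> f M" "f M \<le> hi M" if "1 \<le> M" for M
  proof -
    have "0 < real (k + M) - 1" using that assms by simp
    then have "0 < s * (real (k + M) - 1)" "s * (real (k + M) - 1) \<le> real (k + M) - 1"
      using assms by (simp_all add: mult_left_le_one_le)
    then have "1 < x M" "x M \<le> real (k + M)" unfolding x_def by linarith+
    then show "lo M \<le> f M" "f M \<le> hi M"
      unfolding lo_def hi_def f_def using assms by (intro gM_div_capC_bounds; simp)+
  qed
  ultimately have "f \<longlonglongrightarrow> 1"
    by (intro tendsto_sandwich[of lo f sequentially hi] eventually_sequentiallyI) auto
  then show ?thesis unfolding f_def x_def Let_def .
qed

end
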